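(* Let $k\ge1$, let $\mathcal{H}$ be a separable infinite-dimensional complex Hilbert space with orthonormal basis $\{e_n\}_{n\ge0}$, and let $\alpha_0,\dots,\alpha_k\in\mathbb{C}$ with $\sum_{i=0}^k|\alpha_i|^2<1$. Let $T$ be the operator on $\mathcal{H}$ given by $Te_0=\alpha_0e_0+\alpha_1e_1+\cdots+\alpha_ke_k$ and $Te_n=e_{n+k}$ for $n\ge1$ (so $T$ is a completely non-unitary contraction with $\dim\mathcal{D}_T=1$, $\mathcal{D}_T\subseteq\mathcal{D}_{T^*}$, $\dim\mathcal{D}_{T^*}<\infty$). Then $T$ is analytic if and only if either $\alpha_0=0$ or $\alpha_j\neq0$ for some $1\le j\le k$.
   Context: For a contraction $T$ on $\mathcal{H}$, $\mathcal{D}_T=\overline{(I-T^*T)^{1/2}\mathcal{H}}$ and $\mathcal{D}_{T^*}=\overline{(I-TT^* )^{1/2}\mathcal{H}}$. A contraction is completely non-unitary if it has no nonzero reducing subspace on which it is unitary. $T$ is analytic if $\bigcap_{m\ge1}T^m\mathcal{H}=\{0\}$. *)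

theory Defs
  imports "HOL-Analysis.Analysis"
begin

text \<open>Concrete model of a separable infinite-dimensional complex Hilbert space:
  the space l2(N) of square-summable complex sequences; the orthonormal basis
  e_n is the standard unit-vector basis, and a vector x corresponds to
  the sum over n of x n times e_n.\<close>

definition l2_seq :: "(nat \<Rightarrow> complex) set" where
  "l2_seq = {x. summable (\<lambda>n. (cmod (x n))\<^sup>2)}"

text \<open>The operator T with T e_0 = alpha_0 e_0 + ... + alpha_k e_k and T e_n = e_(n+k)
  for n >= 1, written in coordinates: the m-th coordinate of T x is
  alpha_m * x_0 for m <= k, and x_(m-k) for m > k.\<close>

definition T_op :: "nat \<Rightarrow> (nat \<Rightarrow> complex) \<Rightarrow> (nat \<Rightarrow> complex) \<Rightarrow> (nat \<Rightarrow> complex)" where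
  "T_op k \<alpha> x = (\<lambda>m. if m \<le> k then \<alpha> m * x 0 else x (m - k))"

definition analytic_op :: "(nat \<Rightarrow> complex) set \<Rightarrow> ((nat \<Rightarrow> complex) \<Rightarrow> (nat \<Rightarrow> complex)) \<Rightarrow> bool" where
  "analytic_op H T \<longleftrightarrow> (\<Inter>m\<in>{1..}. (T ^^ m) ` H) = {(\<lambda>_. 0)}"

end

theory Submission
  imports Defs
begin

text \<open>If \<open>\<alpha>\<^sub>0 = 0\<close>, then \<open>T\<^sup>j x\<close> vanishes in the coordinates below \<open>j\<close>, so a
  vector in every range \<open>T\<^sup>j H\<close> is zero. If \<open>\<alpha>\<^sub>0 \<noteq> 0\<close> and \<open>\<alpha>\<^sub>1 = \<dots> = \<alpha>\<^sub>k = 0\<close>,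
  then \<open>e\<^sub>0\<close> is an eigenvector with eigenvalue \<open>\<alpha>\<^sub>0\<close>, so it lies in every range.
  In the remaining case, every \<open>y = T\<^sup>j\<^sup>+\<^sup>1 x\<close> satisfies \<open>\<alpha>\<^sub>0\<^sup>j\<^sup>+\<^sup>1 y\<^sub>i\<^sub>+\<^sub>j\<^sub>k = \<alpha>\<^sub>i y\<^sub>0\<close>
  for \<open>1 \<le> i \<le> k\<close>. For \<open>y\<close> in all ranges this holds for every \<open>j\<close>; as \<open>|\<alpha>\<^sub>0| \<le> 1\<close>
  (the only use of \<open>\<Sum>|\<alpha>\<^sub>i|\<^sup>2 < 1\<close>) and \<open>y\<^sub>n \<rightarrow> 0\<close>, choosing \<open>\<alpha>\<^sub>i \<noteq> 0\<close> gives \<open>y\<^sub>0 = 0\<close>,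
  and then the same identities kill every coordinate \<open>y\<^sub>n\<close>, \<open>n \<ge> 1\<close>.\<close>

lemma analytic_opI:
  assumes "(\<lambda>_. 0) \<in> H" and "\<And>m. (T ^^ m) (\<lambda>_. 0) = (\<lambda>_. 0)"
    and "\<And>y. (\<And>j. y \<in> (T ^^ Suc j) ` H) \<Longrightarrow> y = (\<lambda>_. 0)"
  shows "analytic_op H T"
proof -
  have "(\<lambda>_. 0) \<in> (T ^^ m) ` H" for m
    using assms(1,2) by (metis image_eqI)
  moreover have "y = (\<lambda>_. 0)" if "y \<in> (\<Inter>m\<in>{1..}. (T ^^ m) ` H)" for y
    using that by (intro assms(3)) (auto simp del: funpow.simps)
  ultimately show ?thesis
    unfolding analytic_op_def by blast
qed

lemma analytic_opD:
  assumes "analytic_op H T" and "\<And>j. y \<in> (T ^^ Suc j) ` H"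
  shows "y = (\<lambda>_. 0)"
proof -
  have "y \<in> (T ^^ m) ` H" if "m \<ge> 1" for m
    using assms(2)[of "m - 1"] that by (simp del: funpow.simps)
  then show ?thesis
    using assms(1) unfolding analytic_op_def by blast
qed

lemma finite_support_in_l2_seq:
  assumes "finite N" and "\<And>n. n \<notin> N \<Longrightarrow> x n = 0"
  shows "x \<in> l2_seq"
  unfolding l2_seq_def using assms by (auto intro: summable_finite)

lemma l2_seq_tendsto_zero:
  assumes "x \<in> l2_seq"
  shows "x \<longlonglongrightarrow> 0"
proof -
  have "(\<lambda>n. (cmod (x n))\<^sup>2) \<longlonglongrightarrow> 0"
    using assms unfolding l2_seq_def mem_Collect_eq by (rule summable_LIMSEQ_zero)
  then have "(\<lambda>n. sqrt ((cmod (x n))\<^sup>2)) \<longlonglongrightarrow> sqrt 0"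
    by (rule tendsto_real_sqrt)
  then show ?thesis
    by (simp add: tendsto_norm_zero_iff)
qed

lemma T_op_apply_le [simp]: "m \<le> k \<Longrightarrow> T_op k \<alpha> x m = \<alpha> m * x 0"
  by (simp add: T_op_def)

lemma T_op_apply_gt [simp]: "k < m \<Longrightarrow> T_op k \<alpha> x m = x (m - k)"
  by (simp add: T_op_def)

lemma T_op_preserves_l2_seq:
  assumes "x \<in> l2_seq"
  shows "T_op k \<alpha> x \<in> l2_seq"
proof -
  have "summable (\<lambda>n. (cmod (x (Suc n)))\<^sup>2)"
    using assms unfolding l2_seq_def mem_Collect_eq by (rule summable_Suc_iff[THEN iffD2])
  then have "summable (\<lambda>n. (cmod (T_op k \<alpha> x (n + Suc k)))\<^sup>2)"
    by simp
  then show ?thesis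
    unfolding l2_seq_def mem_Collect_eq by (rule summable_iff_shift[THEN iffD1])
qed

lemma funpow_T_op_zero: "(T_op k \<alpha> ^^ m) (\<lambda>_. 0) = (\<lambda>_. 0)"
  by (induction m) (auto simp: T_op_def)

lemma funpow_T_op_e0:
  assumes "\<And>j. j \<in> {1..k} \<Longrightarrow> \<alpha> j = 0"
  shows "(T_op k \<alpha> ^^ m) (\<lambda>n. if n = 0 then c else 0) = (\<lambda>n. if n = 0 then \<alpha> 0 ^ m * c else 0)"
  using assms by (induction m) (auto simp: T_op_def fun_eq_iff)

lemma funpow_T_op_vanishes_below:
  assumes "\<alpha> 0 = 0" and "k \<ge> 1" and "n < j"
  shows "(T_op k \<alpha> ^^ j) x n = 0"
  using assms(3)
proof (induction j arbitrary: n)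
  case 0
  then show ?case by simp
next
  case (Suc j)
  then show ?case
    using assms(1,2) by (cases "n \<le> k") auto
qed

lemma funpow_T_op_coord_relation:
  assumes "1 \<le> i" and "i \<le> k"
  shows "\<alpha> 0 ^ Suc j * (T_op k \<alpha> ^^ Suc j) x (i + j * k) = \<alpha> i * (T_op k \<alpha> ^^ Suc j) x 0"
proof (induction j)
  case 0
  show ?case
    using assms by simp
next
  case (Suc j)
  define z where "z = (T_op k \<alpha> ^^ Suc j) x"
  have "\<alpha> 0 ^ Suc (Suc j) * T_op k \<alpha> z (i + Suc j * k) = \<alpha> 0 * (\<alpha> 0 ^ Suc j * z (i + j * k))"
    using assms by simp
  also have "\<dots> = \<alpha> 0 * (\<alpha> i * z 0)"
    using Suc.IH by (simp only: z_def)
  also have "\<dots> = \<alpha> i * T_op k \<alpha> z 0"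
    by simp
  finally show ?case
    by (simp only: z_def funpow.simps(2) o_apply)
qed

lemma in_all_ranges_T_op_coord0_eq_zero:
  assumes "cmod (\<alpha> 0) \<le> 1" and "i \<in> {1..k}" and "\<alpha> i \<noteq> 0"
    and "\<And>j. y \<in> (T_op k \<alpha> ^^ Suc j) ` l2_seq"
  shows "y 0 = 0"
proof -
  have identity: "\<alpha> 0 ^ Suc j * y (i + j * k) = \<alpha> i * y 0" for j
    using assms(2) assms(4)[of j] funpow_T_op_coord_relation by fastforce
  have bound: "cmod (\<alpha> i * y 0) \<le> cmod (y (i + j * k))" for j
  proof -
    have "cmod (\<alpha> i * y 0) = cmod (\<alpha> 0 ^ Suc j * y (i + j * k))"
      by (simp only: identity)
    also have "\<dots> = cmod (\<alpha> 0) ^ Suc j * cmod (y (i + j * k))"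
      by (simp only: norm_mult norm_power)
    also have "\<dots> \<le> cmod (y (i + j * k))"
      by (intro mult_left_le_one_le norm_ge_zero zero_le_power power_le_one assms(1))
    finally show ?thesis .
  qed
  have "y \<in> l2_seq"
    using assms(4)[of 0] T_op_preserves_l2_seq by auto
  moreover have "strict_mono (\<lambda>j. i + j * k)"
    using assms(2) by (auto simp: strict_mono_def)
  ultimately have "(\<lambda>j. cmod (y (i + j * k))) \<longlonglongrightarrow> 0"
    using LIMSEQ_subseq_LIMSEQ[OF l2_seq_tendsto_zero]
    by (simp add: o_def tendsto_norm_zero_iff)
  then have "cmod (\<alpha> i * y 0) \<le> 0"
    using bound by (intro LIMSEQ_le_const) auto
  then show ?thesis
    using assms(3) by simp
qed

lemma in_all_ranges_T_op_eq_zero: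
  assumes "cmod (\<alpha> 0) \<le> 1" and "\<alpha> 0 \<noteq> 0" and "i \<in> {1..k}" and "\<alpha> i \<noteq> 0"
    and "\<And>j. y \<in> (T_op k \<alpha> ^^ Suc j) ` l2_seq"
  shows "y = (\<lambda>_. 0)"
proof
  fix n
  have y0: "y 0 = 0"
    by (rule in_all_ranges_T_op_coord0_eq_zero[OF assms(1,3-5)])
  show "y n = 0"
  proof (cases "n = 0")
    case True
    then show ?thesis
      using y0 by simp
  next
    case False
    define j where "j = (n - 1) div k"
    define r where "r = Suc ((n - 1) mod k)"
    have k: "k \<ge> 1"
      using assms(3) by simp
    have r: "1 \<le> r" "r \<le> k"
      using k by (simp_all add: r_def Suc_le_eq)
    have n: "n = r + j * k"
      using False by (simp add: r_def j_def mod_div_mult_eq)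
    obtain x where x: "y = (T_op k \<alpha> ^^ Suc j) x"
      using assms(5)[of j] by blast
    have "\<alpha> 0 ^ Suc j * y (r + j * k) = \<alpha> r * y 0"
      unfolding x by (rule funpow_T_op_coord_relation[OF r])
    then show ?thesis
      using assms(2) y0 n by simp
  qed
qed

lemma in_all_ranges_T_op_eq_zero_if_alpha0_zero:
  assumes "\<alpha> 0 = 0" and "k \<ge> 1" and "\<And>j. y \<in> (T_op k \<alpha> ^^ Suc j) ` H"
  shows "y = (\<lambda>_. 0)"
proof
  fix n
  obtain x where "y = (T_op k \<alpha> ^^ Suc n) x"
    using assms(3)[of n] by blast
  then show "y n = 0"
    using funpow_T_op_vanishes_below[of \<alpha> k n "Suc n"] assms(1,2) by simp
qed

lemma analytic_op_T_op:
  assumes "k \<ge> 1" and "cmod (\<alpha> 0) \<le> 1" and "\<alpha> 0 = 0 \<or> (\<exists>i\<in>{1..k}. \<alpha> i \<noteq> 0)"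
  shows "analytic_op l2_seq (T_op k \<alpha>)"
proof (rule analytic_opI)
  show "(\<lambda>_. 0) \<in> l2_seq"
    by (simp add: l2_seq_def)
  show "(T_op k \<alpha> ^^ m) (\<lambda>_. 0) = (\<lambda>_. 0)" for m
    by (rule funpow_T_op_zero)
  fix y
  assume in_ranges: "\<And>j. y \<in> (T_op k \<alpha> ^^ Suc j) ` l2_seq"
  consider "\<alpha> 0 = 0" | i where "\<alpha> 0 \<noteq> 0" "i \<in> {1..k}" "\<alpha> i \<noteq> 0"
    using assms(3) by blast
  then show "y = (\<lambda>_. 0)"
  proof cases
    case 1
    show ?thesis
      by (rule in_all_ranges_T_op_eq_zero_if_alpha0_zero[OF 1 assms(1) in_ranges])
  next
    case 2
    show ?thesis
      by (rule in_all_ranges_T_op_eq_zero[OF assms(2) 2 in_ranges])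
  qed
qed

lemma not_analytic_op_T_op:
  assumes "\<alpha> 0 \<noteq> 0" and "\<And>j. j \<in> {1..k} \<Longrightarrow> \<alpha> j = 0"
  shows "\<not> analytic_op l2_seq (T_op k \<alpha>)"
proof
  assume "analytic_op l2_seq (T_op k \<alpha>)"
  moreover have "(\<lambda>n. if n = 0 then 1 else 0) \<in> (T_op k \<alpha> ^^ m) ` l2_seq" for m
  proof
    have "(T_op k \<alpha> ^^ m) (\<lambda>n. if n = 0 then 1 / \<alpha> 0 ^ m else 0)
        = (\<lambda>n. if n = 0 then \<alpha> 0 ^ m * (1 / \<alpha> 0 ^ m) else 0)"
      by (rule funpow_T_op_e0[OF assms(2)])
    then show "(\<lambda>n. if n = 0 then 1 else 0) = (T_op k \<alpha> ^^ m) (\<lambda>n. if n = 0 then 1 / \<alpha> 0 ^ m else 0)"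
      using assms(1) by (simp add: fun_eq_iff)
    show "(\<lambda>n. if n = 0 then 1 / \<alpha> 0 ^ m else 0) \<in> l2_seq"
      by (rule finite_support_in_l2_seq[of "{0}"]) auto
  qed
  ultimately have "(\<lambda>n::nat. if n = 0 then 1 else 0) = (\<lambda>_. 0 :: complex)"
    by (rule analytic_opD)
  then show False
    using fun_cong[of _ _ 0] by fastforce
qed

theorem corollary4p6:
  fixes k :: nat and \<alpha> :: "nat \<Rightarrow> complex"
  assumes "k \<ge> 1"
    and "(\<Sum>i\<le>k. (cmod (\<alpha> i))\<^sup>2) < 1"
  shows "analytic_op l2_seq (T_op k \<alpha>) \<longleftrightarrow> (\<alpha> 0 = 0 \<or> (\<exists>j\<in>{1..k}. \<alpha> j \<noteq> 0))"
proof -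
  have "(cmod (\<alpha> 0))\<^sup>2 \<le> (\<Sum>i\<le>k. (cmod (\<alpha> i))\<^sup>2)"
    by (rule member_le_sum) auto
  then have "(cmod (\<alpha> 0))\<^sup>2 < 1"
    using assms(2) by linarith
  then have "cmod (\<alpha> 0) \<le> 1"
    by (simp add: abs_square_less_1)
  then show ?thesis
    using analytic_op_T_op[OF assms(1)] not_analytic_op_T_op by blast
qed

end
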